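(* Let $A,\mu=\varrho_0\,dx,\nu=\varrho_1\,dx,r$ be as in the setting below, and let $\varphi\colon A\to[0,r]$ be a continuous function with convex sub-level sets such that $T=\varphi\,{\rm n}$ satisfies $\mu\circ T^{-1}=\nu$ and $T$ is injective on a set of full $\mu$-measure. Assume in addition that $\varphi$ is of class $C^2$ on the interior of $A$ with $\nabla\varphi\ne 0$ there, so that ${\rm n}=\nabla\varphi/|\nabla\varphi|$. Then for almost every $x\in A$, $$\det DT(x)=|\nabla\varphi(x)|\,\varphi(x)^{d-1}K(x)\quad\text{and}\quad \varrho_0(x)=\varrho_1\big(\varphi(x){\rm n}(x)\big)\,|\nabla\varphi(x)|\,\varphi(x)^{d-1}K(x),$$ where $K(x)$ is the Gauss curvature at $x$ of the level set $\{y:\varphi(y)=\varphi(x)\}$.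
   Context: Setting: $d\ge2$, $A\subset\mathbb{R}^d$ compact convex, $\mu=\varrho_0\,dx$ a probability measure on $A$ equivalent to Lebesgue measure on $A$, $B_r=\{|x|\le r\}$, $\nu=\varrho_1\,dx$ a probability measure on $B_r$ equivalent to Lebesgue measure on $B_r$. For a smooth hypersurface $M$ with Gauss map ${\rm n}$, the Gauss curvature at $x$ is $K(x)=\det(\langle\partial_{e_i}{\rm n},e_j\rangle)_{i,j=2}^d$ for an orthonormal basis $e_2,\dots,e_d$ of $T_xM$. *)

theory Defs
  imports "HOL-Analysis.Analysis"
begin

definition tangent_onb :: "real^'n \<Rightarrow> (nat \<Rightarrow> real^'n) \<Rightarrow> bool" where
  "tangent_onb v e \<longleftrightarrow>
     (\<forall>i\<in>{2..CARD('n)}. \<forall>j\<in>{2..CARD('n)}. e i \<bullet> e j = (if i = j then 1 else 0)) \<and>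
     (\<forall>i\<in>{2..CARD('n)}. e i \<bullet> v = 0)"

text \<open>Gauss curvature at x of the hypersurface through x whose Gauss map is (the
  restriction of) the unit normal field nmap: the determinant of the
  (d-1)x(d-1) matrix with entries the inner product of the derivative of nmap in
  direction e i with e j, for an orthonormal basis e 2..e d of the tangent space
  (nmap x)-perp.\<close>
definition gauss_curvature :: "(real^'n \<Rightarrow> real^'n) \<Rightarrow> real^'n \<Rightarrow> real" where
  "gauss_curvature nmap x =
     (THE k. \<forall>e. tangent_onb (nmap x) e \<longrightarrow>
        k = (\<Sum>p | p permutes {2..CARD('n)}. of_int (sign p) *
               (\<Prod>i\<in>{2..CARD('n)}. frechet_derivative nmap (at x) (e i) \<bullet> e (p i))))"

end

theory Submission
  imports Defs
begin

(* Pointwise, DT h = |\<nabla>\<phi>| (n \<bullet> h) n + \<phi> Dn h where Dn takes values in n\<^sup>\<bottom>; computing the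
   determinant in an orthonormal frame n, e 2, ..., e d gives det DT = |\<nabla>\<phi>| \<phi>^(d-1) K with K
   the Gauss curvature of the level set.  Convexity of the sublevel sets makes the
   derivative of \<nabla>\<phi> monotone on n\<^sup>\<bottom>, and a homotopy to the identity then gives K \<ge> 0.
   Globally, push-forward, a.e. injectivity and the change of variables formula give
   \<rho>0 = |det DT| \<rho>1 \<circ> T a.e., and the boundary of the convex body A is negligible. *)

(* The Leibniz expansion of a determinant whose rows and columns are indexed by an
   arbitrary finite set; the definition of gauss_curvature is written in this form
   over the index set {2..d}. *)
definition leibniz_det :: "'a set \<Rightarrow> ('a \<Rightarrow> 'a \<Rightarrow> real) \<Rightarrow> real" where
  "leibniz_det I m = (\<Sum>p | p permutes I. of_int (sign p) * (\<Prod>i\<in>I. m i (p i)))"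

lemma det_eq_leibniz_det: "det (M :: real^'n^'n) = leibniz_det UNIV (\<lambda>i j. M $ i $ j)"
  by (simp add: det_def leibniz_det_def)

lemma leibniz_det_reindex:
  assumes bij: "bij_betw f A B" and fin: "finite A"
  shows "leibniz_det B m = leibniz_det A (\<lambda>i j. m (f i) (f j))"
proof -
  let ?F = "\<lambda>\<pi> x. if x \<in> B then f (\<pi> (inv_into A f x)) else x"
  have bF: "bij_betw ?F {\<pi>. \<pi> permutes A} {\<pi>. \<pi> permutes B}"
    by (rule bij_betw_permutations[OF bij])
  have "leibniz_det B m = (\<Sum>\<pi>\<in>{\<pi>. \<pi> permutes A}. of_int (sign (?F \<pi>)) * (\<Prod>i\<in>B. m i (?F \<pi> i)))"
    unfolding leibniz_det_def by (rule sum.reindex_bij_betw[OF bF, symmetric])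
  also have "\<dots> = leibniz_det A (\<lambda>i j. m (f i) (f j))"
    unfolding leibniz_det_def
  proof (rule sum.cong[OF refl])
    fix \<pi> assume "\<pi> \<in> {\<pi>. \<pi> permutes A}"
    then have pA: "\<pi> permutes A" by simp
    interpret pb: permutes_bij_finite \<pi> A B f "inv_into A f" "?F \<pi>"
      by unfold_locales (use pA bij fin in \<open>auto simp: bij_betw_inv_into_left\<close>)
    have "(\<Prod>i\<in>B. m i (?F \<pi> i)) = (\<Prod>x\<in>A. m (f x) (?F \<pi> (f x)))"
      by (rule prod.reindex_bij_betw[OF bij, symmetric])
    also have "\<dots> = (\<Prod>x\<in>A. m (f x) (f (\<pi> x)))"
      using bij by (intro prod.cong refl) (auto simp: bij_betw_inv_into_left bij_betwE)
    finally show "of_int (sign (?F \<pi>)) * (\<Prod>i\<in>B. m i (?F \<pi> i)) =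
                  of_int (sign \<pi>) * (\<Prod>x\<in>A. m (f x) (f (\<pi> x)))"
      using pb.sign_p' by simp
  qed
  finally show ?thesis .
qed

lemma leibniz_det_cong:
  assumes "\<And>i j. i \<in> I \<Longrightarrow> j \<in> I \<Longrightarrow> m i j = m' i j"
  shows "leibniz_det I m = leibniz_det I m'"
  unfolding leibniz_det_def
proof (rule sum.cong[OF refl])
  fix p assume "p \<in> {p. p permutes I}"
  then have "p i \<in> I" if "i \<in> I" for i using that by (simp add: permutes_in_image)
  then show "of_int (sign p) * (\<Prod>i\<in>I. m i (p i)) = of_int (sign p) * (\<Prod>i\<in>I. m' i (p i))"
    using assms by (metis (no_types, lifting) prod.cong)
qed

lemma leibniz_det_scale:
  assumes "finite I"
  shows "leibniz_det I (\<lambda>i j. c * m i j) = c ^ card I * leibniz_det I m"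
  unfolding leibniz_det_def by (simp add: prod.distrib sum_distrib_left algebra_simps)

lemma permutes_fixing_first:
  assumes p: "p permutes {1..d::nat}" and p1: "p 1 = 1"
  shows "p permutes {2..d}"
proof -
  have "p x = x" if "x \<notin> {2..d}" for x
  proof (cases "x = 1")
    case False
    then have "x \<notin> {1..d}" using that by auto
    then show ?thesis using p by (simp add: permutes_not_in)
  qed (use p1 in simp)
  then show ?thesis using p unfolding permutes_def by blast
qed

lemma leibniz_det_first_column:
  fixes m :: "nat \<Rightarrow> nat \<Rightarrow> real"
  assumes d: "d \<ge> 1" and zero: "\<And>i. i \<in> {2..d} \<Longrightarrow> m i 1 = 0"
  shows "leibniz_det {1..d} m = m 1 1 * leibniz_det {2..d} m"
proof -
  let ?P1 = "{p. p permutes {1..d}}" and ?P2 = "{p. p permutes {2..d::nat}}"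
  have sub: "?P2 \<subseteq> ?P1" by (auto intro: permutes_subset)
  have vanish: "(\<Prod>i\<in>{1..d}. m i (p i)) = 0" if p: "p \<in> ?P1 - ?P2" for p
  proof -
    have p1: "p permutes {1..d}" using p by simp
    then have "p 1 \<noteq> 1" using p permutes_fixing_first by blast
    obtain j where j: "j \<in> {1..d}" "p j = 1"
      using d permutes_image[OF p1] by (metis atLeastAtMost_iff imageE order_refl)
    with \<open>p 1 \<noteq> 1\<close> have "j \<in> {2..d}" by (cases "j = 1") auto
    then show ?thesis using zero j by (metis finite_atLeastAtMost prod_zero)
  qed
  have "leibniz_det {1..d} m = (\<Sum>p\<in>?P2. of_int (sign p) * (\<Prod>i\<in>{1..d}. m i (p i)))"
    unfolding leibniz_det_def
    by (rule sum.mono_neutral_right) (use sub vanish finite_permutations in auto)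
  also have "\<dots> = (\<Sum>p\<in>?P2. m 1 1 * (of_int (sign p) * (\<Prod>i\<in>{2..d}. m i (p i))))"
  proof (rule sum.cong[OF refl])
    fix p assume "p \<in> ?P2"
    then have "p 1 = 1" by (simp add: permutes_not_in)
    moreover have "{1..d} = insert 1 {2..d}" using d by auto
    ultimately show "of_int (sign p) * (\<Prod>i\<in>{1..d}. m i (p i)) =
        m 1 1 * (of_int (sign p) * (\<Prod>i\<in>{2..d}. m i (p i)))"
      by simp
  qed
  also have "\<dots> = m 1 1 * leibniz_det {2..d} m"
    by (simp add: leibniz_det_def sum_distrib_left)
  finally show ?thesis .
qed

lemma det_in_orthonormal_frame:
  fixes L :: "real^'n \<Rightarrow> real^'n" and f :: "'a \<Rightarrow> real^'n"
  assumes lin: "linear L" and bij: "bij_betw \<beta> (UNIV::'n set) I"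
    and orth: "\<And>i j. i \<in> I \<Longrightarrow> j \<in> I \<Longrightarrow> f i \<bullet> f j = (if i = j then 1 else 0)"
  shows "det (matrix L) = leibniz_det I (\<lambda>i j. L (f i) \<bullet> f j)"
proof -
  define F :: "real^'n^'n" where "F = (\<chi> k c. f (\<beta> c) $ k)"
  have FtF: "transpose F ** F = mat 1"
  proof -
    have "inj \<beta>" and "\<beta> c \<in> I" for c using bij by (auto simp: bij_betw_def)
    then have "f (\<beta> a) \<bullet> f (\<beta> b) = (if a = b then 1 else 0)" for a b
      using orth by (auto simp: inj_def)
    then show ?thesis
      by (simp add: vec_eq_iff mat_def matrix_matrix_mult_def transpose_def F_def inner_vec_def)
  qed
  have detF: "det F * det F = 1"
    using arg_cong[OF FtF, of det] by (simp add: det_mul det_transpose)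
  have LF: "(matrix L ** F) $ i $ b = L (f (\<beta> b)) $ i" for i b
  proof -
    have "(matrix L ** F) $ i $ b = (matrix L *v f (\<beta> b)) $ i"
      by (simp add: matrix_matrix_mult_def matrix_vector_mult_def F_def)
    then show ?thesis using fun_cong[OF matrix_vector_mul(2)[OF lin]] by metis
  qed
  define G where "G = transpose F ** (matrix L ** F)"
  have G: "G $ a $ b = f (\<beta> a) \<bullet> L (f (\<beta> b))" for a b
    unfolding G_def matrix_matrix_mult_def[of "transpose F"] LF by (simp add: transpose_def F_def inner_vec_def)
  have "det G = det F * det (matrix L) * det F"
    by (simp add: G_def det_mul det_transpose)
  then have "det (matrix L) = det (transpose G)"
    using detF by (simp add: det_transpose algebra_simps)
  also have "\<dots> = leibniz_det UNIV (\<lambda>a b. L (f (\<beta> a)) \<bullet> f (\<beta> b))"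
    by (simp add: det_eq_leibniz_det transpose_def G inner_commute)
  also have "\<dots> = leibniz_det I (\<lambda>i j. L (f i) \<bullet> f j)"
    by (rule leibniz_det_reindex[OF bij, symmetric]) simp
  finally show ?thesis .
qed

lemma exists_tangent_onb:
  fixes v :: "real^'n"
  assumes "v \<noteq> 0"
  shows "\<exists>e. tangent_onb v e"
proof -
  let ?S = "{x. v \<bullet> x = 0}"
  obtain B where B: "B \<subseteq> ?S" "pairwise orthogonal B" "\<And>x. x \<in> B \<Longrightarrow> norm x = 1"
      "independent B" "card B = dim ?S"
    by (rule orthonormal_basis_subspace[OF subspace_hyperplane]) blast
  have "card B = CARD('n) - 1" using B(5) dim_hyperplane[OF assms] by simp
  moreover have "finite B" using B(4) by (simp add: independent_imp_finite)
  ultimately obtain \<gamma> where \<gamma>: "bij_betw \<gamma> {2..CARD('n)} B"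
    using finite_same_card_bij[of "{2..CARD('n)}" B] by auto
  have "tangent_onb v \<gamma>"
    unfolding tangent_onb_def
  proof safe
    fix i j assume i: "i \<in> {2..CARD('n)}" and j: "j \<in> {2..CARD('n)}"
    have \<gamma>B: "\<gamma> i \<in> B" "\<gamma> j \<in> B" using \<gamma> i j by (auto simp: bij_betw_def)
    show "\<gamma> i \<bullet> \<gamma> j = (if i = j then 1 else 0)"
    proof (cases "i = j")
      case True
      then show ?thesis using B(3)[OF \<gamma>B(1)] by (simp add: norm_eq_1)
    next
      case False
      then have "\<gamma> i \<noteq> \<gamma> j" using \<gamma> i j by (auto simp: bij_betw_def inj_on_def)
      then show ?thesis using B(2) \<gamma>B False by (auto simp: pairwise_def orthogonal_def)
    qed
  next
    fix i assume "i \<in> {2..CARD('n)}"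
    then have "\<gamma> i \<in> B" using \<gamma> by (auto simp: bij_betw_def)
    then show "\<gamma> i \<bullet> v = 0" using B(1) by (auto simp: inner_commute)
  qed
  then show ?thesis by blast
qed

(* In an orthonormal basis n, e 2, ..., e d, a map that sends the tangent vectors
   e i into the tangent space is block triangular. *)
lemma det_normal_block:
  fixes L :: "real^'n \<Rightarrow> real^'n"
  assumes dim: "CARD('n) \<ge> 2" and lin: "linear L" and unit: "norm n = 1"
    and e: "tangent_onb n e"
    and tangent: "\<And>i. i \<in> {2..CARD('n)} \<Longrightarrow> L (e i) \<bullet> n = 0"
  shows "det (matrix L) = (L n \<bullet> n) * leibniz_det {2..CARD('n)} (\<lambda>i j. L (e i) \<bullet> e j)"
proof -
  let ?d = "CARD('n)"
  define f where "f i = (if i = 1 then n else e i)" for i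
  obtain \<beta> where \<beta>: "bij_betw \<beta> (UNIV :: 'n set) {1..?d}"
    using finite_same_card_bij[of "UNIV :: 'n set" "{1..?d}"] by auto
  have orth: "f i \<bullet> f j = (if i = j then 1 else 0)" if "i \<in> {1..?d}" "j \<in> {1..?d}" for i j
  proof -
    have "n \<bullet> n = 1" using unit by (simp add: norm_eq_1)
    moreover have "e k \<bullet> n = 0" "n \<bullet> e k = 0" if "k \<in> {2..?d}" for k
      using e that by (auto simp: tangent_onb_def inner_commute)
    moreover have "e i \<bullet> e j = (if i = j then 1 else 0)" if "i \<in> {2..?d}" "j \<in> {2..?d}"
      using e that by (auto simp: tangent_onb_def)
    ultimately show ?thesis using that by (cases "i = 1"; cases "j = 1") (auto simp: f_def)
  qed
  have "det (matrix L) = leibniz_det {1..?d} (\<lambda>i j. L (f i) \<bullet> f j)"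
    by (rule det_in_orthonormal_frame[OF lin \<beta> orth])
  also have "\<dots> = (L (f 1) \<bullet> f 1) * leibniz_det {2..?d} (\<lambda>i j. L (f i) \<bullet> f j)"
    by (rule leibniz_det_first_column) (use dim tangent in \<open>auto simp: f_def\<close>)
  also have "leibniz_det {2..?d} (\<lambda>i j. L (f i) \<bullet> f j) = leibniz_det {2..?d} (\<lambda>i j. L (e i) \<bullet> e j)"
    by (rule leibniz_det_cong) (auto simp: f_def)
  finally show ?thesis by (simp add: f_def)
qed

lemma det_normal_tangent_map:
  fixes L :: "real^'n \<Rightarrow> real^'n"
  assumes dim: "CARD('n) \<ge> 2" and lin: "linear L" and unit: "norm n = 1"
    and tangent: "\<And>h. L h \<bullet> n = 0" and e: "tangent_onb n e"
  shows "det (matrix (\<lambda>h. (a * (n \<bullet> h)) *\<^sub>R n + s *\<^sub>R L h))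
           = a * s ^ (CARD('n) - 1) * leibniz_det {2..CARD('n)} (\<lambda>i j. L (e i) \<bullet> e j)"
proof -
  have nn: "n \<bullet> n = 1" using unit by (simp add: norm_eq_1)
  have en: "n \<bullet> e i = 0" if "i \<in> {2..CARD('n)}" for i
    using e that by (simp add: tangent_onb_def inner_commute)
  have "linear (\<lambda>h. (a * (n \<bullet> h)) *\<^sub>R n + s *\<^sub>R L h)"
    using lin by (intro linearI) (simp_all add: linear_add linear_cmul inner_add_right algebra_simps)
  then have "det (matrix (\<lambda>h. (a * (n \<bullet> h)) *\<^sub>R n + s *\<^sub>R L h))
      = a * leibniz_det {2..CARD('n)} (\<lambda>i j. ((a * (n \<bullet> e i)) *\<^sub>R n + s *\<^sub>R L (e i)) \<bullet> e j)"
    by (subst det_normal_block[OF dim _ unit e]) (simp_all add: nn tangent en inner_add_left)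
  also have "\<dots> = a * leibniz_det {2..CARD('n)} (\<lambda>i j. s * (L (e i) \<bullet> e j))"
    by (intro arg_cong2[where f="(*)"] refl leibniz_det_cong) (simp add: en inner_add_left)
  finally show ?thesis using dim by (simp add: leibniz_det_scale)
qed

(* The value of gauss_curvature does not depend on the chosen frame: it is the
   Leibniz expansion of the derivative of the normal field in any tangent frame. *)
lemma gauss_curvature_eq_leibniz_det:
  fixes nmap :: "real^'n \<Rightarrow> real^'n" and x :: "real^'n"
  defines "D \<equiv> frechet_derivative nmap (at x)"
  assumes dim: "CARD('n) \<ge> 2" and unit: "norm (nmap x) = 1" and lin: "linear D"
    and tangent: "\<And>h. D h \<bullet> nmap x = 0" and e: "tangent_onb (nmap x) e"
  shows "gauss_curvature nmap x = leibniz_det {2..CARD('n)} (\<lambda>i j. D (e i) \<bullet> e j)"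
proof -
  have frame_independent:
    "leibniz_det {2..CARD('n)} (\<lambda>i j. D (e' i) \<bullet> e' j) = leibniz_det {2..CARD('n)} (\<lambda>i j. D (e i) \<bullet> e j)"
    if "tangent_onb (nmap x) e'" for e'
    using det_normal_tangent_map[OF dim lin unit tangent that, of 1 1]
      det_normal_tangent_map[OF dim lin unit tangent e, of 1 1] by simp
  let ?K = "\<lambda>e. leibniz_det {2..CARD('n)} (\<lambda>i j. D (e i) \<bullet> e j)"
  have "gauss_curvature nmap x = (THE k. \<forall>e'. tangent_onb (nmap x) e' \<longrightarrow> k = ?K e')"
    by (simp add: gauss_curvature_def leibniz_det_def D_def)
  also have "\<dots> = ?K e"
  proof (rule the_equality)
    show "\<forall>e'. tangent_onb (nmap x) e' \<longrightarrow> ?K e = ?K e'"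
      using frame_independent by simp
  next
    fix k assume "\<forall>e'. tangent_onb (nmap x) e' \<longrightarrow> k = ?K e'"
    then show "k = ?K e" using e by blast
  qed
  finally show ?thesis .
qed

lemma det_nonneg_by_homotopy:
  fixes P Q :: "real^'n \<Rightarrow> real^'n"
  assumes nonsingular: "\<And>t. t \<in> {0..<1} \<Longrightarrow> det (matrix (\<lambda>h. P h + t *\<^sub>R Q h)) \<noteq> 0"
    and pos: "det (matrix P) > 0"
  shows "det (matrix (\<lambda>h. P h + Q h)) \<ge> 0"
proof (rule ccontr)
  let ?f = "\<lambda>t. det (matrix (\<lambda>h. P h + t *\<^sub>R Q h))"
  assume "\<not> ?thesis"
  then have neg: "?f 1 < 0" by simp
  have "continuous_on {0..1} ?f"
    unfolding det_def matrix_def by (simp, intro continuous_intros)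
  moreover have "?f 0 > 0" using pos by simp
  ultimately obtain t where t: "0 \<le> t" "t \<le> 1" "?f t = 0"
    using IVT2'[of ?f 1 0 0] neg by auto
  moreover have "t \<noteq> 1" using t(3) neg by auto
  ultimately show False using nonsingular[of t] by simp
qed

(* If L maps into n\<^sup>\<bottom> and h \<bullet> L h \<ge> 0 on n\<^sup>\<bottom>, then the extension of L by the identity
   in the normal direction has nonnegative determinant (homotopy to the identity;
   no symmetry of L is needed). *)
lemma det_nonneg_if_tangent_monotone:
  fixes L :: "real^'n \<Rightarrow> real^'n"
  assumes unit: "norm n = 1" and lin: "linear L" and tangent: "\<And>h. L h \<bullet> n = 0"
    and monotone: "\<And>h. n \<bullet> h = 0 \<Longrightarrow> L h \<bullet> h \<ge> 0"
  shows "det (matrix (\<lambda>h. (n \<bullet> h) *\<^sub>R n + L h)) \<ge> 0"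
proof -
  have nn: "n \<bullet> n = 1" using unit by (simp add: norm_eq_1)
  have nL: "n \<bullet> L h = 0" for h using tangent by (simp add: inner_commute)
  define Q where "Q h = (n \<bullet> h) *\<^sub>R n + L h - h" for h
  have nonsingular: "det (matrix (\<lambda>h. h + t *\<^sub>R Q h)) \<noteq> 0" if t: "t \<in> {0..<1}" for t
  proof -
    let ?F = "\<lambda>h. h + t *\<^sub>R Q h"
    have linF: "linear ?F"
      using lin unfolding Q_def
      by (intro linearI) (simp_all add: linear_add linear_cmul inner_add_right algebra_simps)
    have "h = 0" if F0: "?F h = 0" for h
    proof -
      have "?F h \<bullet> n = n \<bullet> h"
        by (simp add: Q_def inner_add_left inner_diff_left nn nL inner_commute algebra_simps)
      then have nh: "n \<bullet> h = 0" using F0 by simp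
      then have "?F h \<bullet> h = (1 - t) * (h \<bullet> h) + t * (L h \<bullet> h)"
        by (simp add: Q_def inner_add_left inner_diff_left algebra_simps)
      then have "(1 - t) * (h \<bullet> h) \<le> 0"
        using F0 t monotone[OF nh] by (simp add: add_nonneg_eq_0_iff)
      with t have "h \<bullet> h \<le> 0" by (simp add: mult_le_0_iff)
      then show "h = 0" by (metis antisym inner_ge_zero inner_eq_zero_iff)
    qed
    then show ?thesis
      using det_nz_iff_inj[OF linF] linear_injective_0[OF linF] by blast
  qed
  have "matrix (\<lambda>h. h) = (mat 1 :: real^'n^'n)"
    using matrix_id_mat_1 by (simp add: id_def)
  then have "det (matrix (\<lambda>h::real^'n. h)) > 0" by simp
  from det_nonneg_by_homotopy[of "\<lambda>h. h" Q, OF nonsingular this]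
  have "det (matrix (\<lambda>h. h + Q h)) \<ge> 0" .
  then show ?thesis by (simp add: Q_def)
qed

(* Derivative of the normalisation v \<mapsto> v / |v| at v \<noteq> 0: projection onto v\<^sup>\<bottom>
   followed by division by |v|. *)
definition sgn_deriv :: "'a::real_inner \<Rightarrow> 'a \<Rightarrow> 'a" where
  "sgn_deriv v h = (h - (sgn v \<bullet> h) *\<^sub>R sgn v) /\<^sub>R norm v"

lemma linear_sgn_deriv: "linear (sgn_deriv v)"
  unfolding sgn_deriv_def
  by (intro linearI) (simp_all add: inner_add_right scaleR_add_left algebra_simps)

lemma sgn_deriv_orthogonal: "sgn_deriv v h \<bullet> sgn v = 0"
proof (cases "v = 0")
  case False
  then have "sgn v \<bullet> sgn v = 1" using norm_sgn[of v] by (simp add: norm_eq_1)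
  then show ?thesis by (simp add: sgn_deriv_def inner_diff_left inner_diff_right inner_commute)
qed (simp add: sgn_deriv_def)

lemma has_derivative_sgn:
  fixes v :: "'a::real_inner"
  assumes "v \<noteq> 0"
  shows "(sgn has_derivative sgn_deriv v) (at v)"
proof -
  have nv: "norm v \<noteq> 0" using assms by simp
  have "((\<lambda>y. inverse (norm y)) has_derivative
      (\<lambda>h. - (inverse (norm v) * (h \<bullet> sgn v) * inverse (norm v)))) (at v)"
    by (rule Deriv.has_derivative_inverse[OF nv has_derivative_norm[OF assms]])
  from has_derivative_scaleR[OF this has_derivative_ident]
  have "((\<lambda>y. inverse (norm y) *\<^sub>R y) has_derivative
      (\<lambda>h. inverse (norm v) *\<^sub>R h + (- (inverse (norm v) * (h \<bullet> sgn v) * inverse (norm v))) *\<^sub>R v)) (at v)" .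
  then have "((\<lambda>y. inverse (norm y) *\<^sub>R y) has_derivative sgn_deriv v) (at v)"
    by (rule has_derivative_eq_rhs)
       (use nv in \<open>simp add: fun_eq_iff sgn_deriv_def sgn_div_norm inner_commute algebra_simps\<close>)
  moreover have "(\<lambda>y. inverse (norm y) *\<^sub>R y) = sgn"
    by (simp add: fun_eq_iff sgn_div_norm)
  ultimately show ?thesis by (rule back_subst)
qed

lemma has_derivative_normalized:
  assumes dg: "(g has_derivative g') (at x)" and gnz: "g x \<noteq> 0"
  shows "((\<lambda>y. sgn (g y)) has_derivative (\<lambda>h. sgn_deriv (g x) (g' h))) (at x)"
  using has_derivative_compose[OF dg has_derivative_sgn[OF gnz]] .

lemma has_derivative_scaled_normalized_gradient:
  assumes dphi: "(\<phi> has_derivative (\<lambda>h. g x \<bullet> h)) (at x)"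
    and dg: "(g has_derivative g') (at x)" and gnz: "g x \<noteq> 0"
  shows "((\<lambda>y. \<phi> y *\<^sub>R sgn (g y)) has_derivative
           (\<lambda>h. (g x \<bullet> h) *\<^sub>R sgn (g x) + \<phi> x *\<^sub>R sgn_deriv (g x) (g' h))) (at x)"
  using has_derivative_scaleR[OF dphi has_derivative_normalized[OF dg gnz]]
  by (simp add: add.commute)

lemma linear_normalized_derivative:
  "(g has_derivative g') (at x) \<Longrightarrow> linear (\<lambda>h. sgn_deriv (g x) (g' h))"
  using linear_compose[OF has_derivative_linear linear_sgn_deriv] by (simp add: o_def)

lemma gauss_curvature_normalized_in_frame:
  fixes g :: "real^'n \<Rightarrow> real^'n"
  assumes dim: "CARD('n) \<ge> 2" and dg: "(g has_derivative g') (at x)" and gnz: "g x \<noteq> 0"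
    and e: "tangent_onb (sgn (g x)) e"
  shows "gauss_curvature (\<lambda>y. sgn (g y)) x
           = leibniz_det {2..CARD('n)} (\<lambda>i j. sgn_deriv (g x) (g' (e i)) \<bullet> e j)"
proof -
  have D: "frechet_derivative (\<lambda>y. sgn (g y)) (at x) = (\<lambda>h. sgn_deriv (g x) (g' h))"
    by (rule frechet_derivative_at[OF has_derivative_normalized[OF dg gnz], symmetric])
  have "norm (sgn (g x)) = 1" using gnz by (simp add: norm_sgn)
  from gauss_curvature_eq_leibniz_det[where nmap="\<lambda>y. sgn (g y)" and x=x, OF dim this _ _ e]
  show ?thesis
    unfolding D using linear_normalized_derivative[OF dg] by (simp add: sgn_deriv_orthogonal)
qed

lemma det_normalized_gradient_map:
  fixes g :: "real^'n \<Rightarrow> real^'n"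
  assumes dim: "CARD('n) \<ge> 2" and dg: "(g has_derivative g') (at x)" and gnz: "g x \<noteq> 0"
  shows "det (matrix (\<lambda>h. (a * (sgn (g x) \<bullet> h)) *\<^sub>R sgn (g x) + s *\<^sub>R sgn_deriv (g x) (g' h)))
           = a * s ^ (CARD('n) - 1) * gauss_curvature (\<lambda>y. sgn (g y)) x"
proof -
  have "sgn (g x) \<noteq> 0" using gnz by (simp add: sgn_zero_iff)
  then obtain e where e: "tangent_onb (sgn (g x)) e"
    using exists_tangent_onb by blast
  have "norm (sgn (g x)) = 1" using gnz by (simp add: norm_sgn)
  from det_normal_tangent_map[OF dim linear_normalized_derivative[OF dg] this sgn_deriv_orthogonal e]
  show ?thesis
    using gauss_curvature_normalized_in_frame[OF dim dg gnz e] by simp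
qed

lemma gauss_curvature_normalized_nonneg:
  fixes g :: "real^'n \<Rightarrow> real^'n"
  assumes dim: "CARD('n) \<ge> 2" and dg: "(g has_derivative g') (at x)" and gnz: "g x \<noteq> 0"
    and monotone: "\<And>h. g x \<bullet> h = 0 \<Longrightarrow> h \<bullet> g' h \<ge> 0"
  shows "gauss_curvature (\<lambda>y. sgn (g y)) x \<ge> 0"
proof -
  have "sgn_deriv (g x) (g' h) \<bullet> h \<ge> 0" if "sgn (g x) \<bullet> h = 0" for h
  proof -
    have "g x \<bullet> h = 0" using that gnz by (simp add: sgn_div_norm)
    moreover have "h \<bullet> sgn (g x) = 0" using that by (simp add: inner_commute)
    then have "sgn_deriv (g x) (g' h) \<bullet> h = (h \<bullet> g' h) / norm (g x)"
      by (simp add: sgn_deriv_def inner_diff_left inner_commute[of _ h] inner_diff_right divide_inverse)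
    ultimately show ?thesis using monotone by simp
  qed
  moreover have "norm (sgn (g x)) = 1" using gnz by (simp add: norm_sgn)
  ultimately have "det (matrix (\<lambda>h. (sgn (g x) \<bullet> h) *\<^sub>R sgn (g x) + sgn_deriv (g x) (g' h))) \<ge> 0"
    using det_nonneg_if_tangent_monotone[OF _ linear_normalized_derivative[OF dg] sgn_deriv_orthogonal]
    by blast
  then show ?thesis
    using det_normalized_gradient_map[OF dim dg gnz, of 1 1] by simp
qed

lemma has_real_derivative_along_curve:
  fixes \<phi> :: "'a::real_inner \<Rightarrow> real" and c :: "real \<Rightarrow> 'a"
  assumes "(\<phi> has_derivative (\<lambda>h. gc \<bullet> h)) (at (c t))" and "(c has_vector_derivative c') (at t)"
  shows "((\<lambda>s. \<phi> (c s)) has_real_derivative (gc \<bullet> c')) (at t)"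
proof -
  from has_derivative_compose[OF assms(2)[unfolded has_vector_derivative_def] assms(1)]
  show ?thesis by (rule has_derivative_imp_has_field_derivative) simp
qed

lemma quasiconvex_gradient_inequality:
  fixes \<phi> :: "'a::real_inner \<Rightarrow> real"
  assumes x: "x \<in> A" and y: "y \<in> A" and le: "\<phi> y \<le> \<phi> x"
    and conv: "convex {z \<in> A. \<phi> z \<le> \<phi> x}"
    and dphi: "(\<phi> has_derivative (\<lambda>h. gx \<bullet> h)) (at x)"
  shows "gx \<bullet> (y - x) \<le> 0"
proof (rule ccontr)
  assume "\<not> gx \<bullet> (y - x) \<le> 0"
  then have pos: "gx \<bullet> (y - x) > 0" by simp
  have "((\<lambda>t. x + t *\<^sub>R (y - x)) has_vector_derivative (y - x)) (at 0)"
    by (auto intro!: derivative_eq_intros)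
  then have "((\<lambda>t. \<phi> (x + t *\<^sub>R (y - x))) has_real_derivative (gx \<bullet> (y - x))) (at 0)"
    by (intro has_real_derivative_along_curve) (simp_all add: dphi)
  from DERIV_pos_inc_right[OF this pos] obtain d where d: "d > 0"
    and inc: "\<And>h. 0 < h \<Longrightarrow> h < d \<Longrightarrow> \<phi> x < \<phi> (x + h *\<^sub>R (y - x))"
    by auto
  define h where "h = min (d/2) (1/2)"
  have h: "0 < h" "h < d" "h \<le> 1" using d by (auto simp: h_def)
  have "(1 - h) *\<^sub>R x + h *\<^sub>R y \<in> {z \<in> A. \<phi> z \<le> \<phi> x}"
    using conv x y le h by (intro convexD) auto
  moreover have "(1 - h) *\<^sub>R x + h *\<^sub>R y = x + h *\<^sub>R (y - x)" by (simp add: algebra_simps)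
  ultimately have "\<phi> (x + h *\<^sub>R (y - x)) \<le> \<phi> x" by simp
  with inc[OF h(1,2)] show False by simp
qed

lemma second_order_strict_decrease:
  fixes f f' :: "real \<Rightarrow> real"
  assumes \<delta>: "\<delta> > 0"
    and df: "\<And>t. 0 \<le> t \<Longrightarrow> t < \<delta> \<Longrightarrow> (f has_real_derivative f' t) (at t)"
    and critical: "f' 0 = 0" and concave: "(f' has_real_derivative c) (at 0)" and c: "c < 0"
  shows "\<exists>t>0. t < \<delta> \<and> f t < f 0"
proof -
  obtain d where d: "d > 0" and dec: "\<And>h. 0 < h \<Longrightarrow> h < d \<Longrightarrow> f' h < 0"
    using DERIV_neg_dec_right[OF concave c] critical by force
  define t where "t = min d \<delta> / 2"
  have t: "0 < t" "t < d" "t < \<delta>" using d \<delta> by (auto simp: t_def)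
  obtain z where z: "0 < z" "z < t" "f t - f 0 = (t - 0) * f' z"
    using MVT2[OF t(1), of f f'] df t by force
  have "t * f' z < 0" using dec[of z] z t by (simp add: mult_pos_neg)
  then have "f t < f 0" using z(3) by simp
  with t show ?thesis by blast
qed

lemma has_real_derivative_gradient_along_parabola:
  fixes g :: "'a::real_inner \<Rightarrow> 'a"
  assumes dg: "(g has_derivative g') (at x)"
  shows "((\<lambda>t. g (x + t *\<^sub>R v + (t\<^sup>2 * s) *\<^sub>R w) \<bullet> (v + (2 * t * s) *\<^sub>R w))
           has_real_derivative (v \<bullet> g' v + 2 * s * (g x \<bullet> w))) (at 0)"
proof -
  let ?c = "\<lambda>t. x + t *\<^sub>R v + (t\<^sup>2 * s) *\<^sub>R w" and ?c' = "\<lambda>t. v + (2 * t * s) *\<^sub>R w"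
  have "(?c has_derivative (\<lambda>h. h *\<^sub>R ?c' 0)) (at 0)"
    by (auto intro!: derivative_eq_intros)
  from has_derivative_compose[OF this] dg
  have "((\<lambda>t. g (?c t)) has_derivative (\<lambda>h. g' (h *\<^sub>R v))) (at 0)" by simp
  moreover have "(?c' has_derivative (\<lambda>h. (2 * h * s) *\<^sub>R w)) (at 0)"
    by (auto intro!: derivative_eq_intros simp: algebra_simps)
  ultimately have "((\<lambda>t. g (?c t) \<bullet> ?c' t) has_derivative
      (\<lambda>h. g (?c 0) \<bullet> (2 * h * s) *\<^sub>R w + g' (h *\<^sub>R v) \<bullet> ?c' 0)) (at 0)"
    by (rule has_derivative_inner)
  moreover have "g (?c 0) \<bullet> (2 * h * s) *\<^sub>R w + g' (h *\<^sub>R v) \<bullet> ?c' 0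
      = h * (v \<bullet> g' v + 2 * s * (g x \<bullet> w))" for h
    using linear_cmul[OF has_derivative_linear[OF dg], of h v]
    by (simp add: inner_commute algebra_simps)
  ultimately show ?thesis
    by (intro has_derivative_imp_has_field_derivative) (auto simp: mult.commute)
qed

lemma quasiconvex_hessian_tangent_nonneg:
  fixes \<phi> :: "'a::real_inner \<Rightarrow> real" and g :: "'a \<Rightarrow> 'a"
  assumes x: "x \<in> interior A" and conv: "convex {z \<in> A. \<phi> z \<le> \<phi> x}"
    and dphi: "\<And>y. y \<in> interior A \<Longrightarrow> (\<phi> has_derivative (\<lambda>h. g y \<bullet> h)) (at y)"
    and dg: "(g has_derivative g') (at x)" and gnz: "g x \<noteq> 0" and perp: "g x \<bullet> v = 0"
  shows "v \<bullet> g' v \<ge> 0"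
proof (rule ccontr)
  assume "\<not> v \<bullet> g' v \<ge> 0"
  then have q: "v \<bullet> g' v < 0" by simp
  have gg: "g x \<bullet> g x > 0" using gnz by simp
  (* Along the parabola c the value of \<phi> first decreases (its second derivative is
     negative), although c leaves the half-space g x \<bullet> (y - x) \<le> 0 which contains the
     sublevel set of \<phi> x. *)
  define s where "s = - (v \<bullet> g' v) / (4 * (g x \<bullet> g x))"
  have s: "s > 0" using q gg unfolding s_def by (intro divide_pos_pos) auto
  define c where "c t = x + t *\<^sub>R v + (t\<^sup>2 * s) *\<^sub>R g x" for t :: real
  define c' where "c' t = v + (2 * t * s) *\<^sub>R g x" for t :: real
  have dc: "(c has_vector_derivative c' t) (at t)" for t
    unfolding c_def c'_def by (auto intro!: derivative_eq_intros simp: algebra_simps)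
  have "open (c -` interior A)"
    by (rule open_vimage[OF open_interior]) (auto simp: c_def intro!: continuous_intros)
  moreover have "0 \<in> c -` interior A" using x by (simp add: c_def)
  ultimately obtain \<delta> where \<delta>: "\<delta> > 0" and inside: "\<And>t. \<bar>t\<bar> < \<delta> \<Longrightarrow> c t \<in> interior A"
    by (metis dist_real_def diff_zero open_dist vimageE)
  define f' where "f' t = g (c t) \<bullet> c' t" for t
  have df: "((\<lambda>t. \<phi> (c t)) has_real_derivative f' t) (at t)" if "0 \<le> t" "t < \<delta>" for t
    unfolding f'_def using that by (intro has_real_derivative_along_curve[OF dphi dc]) (simp add: inside)
  have "2 * s * (g x \<bullet> g x) = - (v \<bullet> g' v) / 2" using gg by (simp add: s_def field_simps)
  then have "(f' has_real_derivative (v \<bullet> g' v / 2)) (at 0)"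
    using has_real_derivative_gradient_along_parabola[OF dg, of v s "g x"]
    by (simp add: f'_def[abs_def] c_def c'_def)
  moreover have "f' 0 = 0" using perp by (simp add: f'_def c_def c'_def)
  ultimately obtain t where t: "0 < t" "t < \<delta>" and below: "\<phi> (c t) < \<phi> (c 0)"
    using second_order_strict_decrease[OF \<delta> df] q by force
  have "c t \<in> A" using inside[of t] t interior_subset by auto
  moreover have "c 0 = x" by (simp add: c_def)
  ultimately have "g x \<bullet> (c t - x) \<le> 0"
    using quasiconvex_gradient_inequality[OF interior_subset[THEN subsetD, OF x] _ _ conv dphi[OF x]]
      below by simp
  moreover have "g x \<bullet> (c t - x) = t\<^sup>2 * s * (g x \<bullet> g x)"
    using perp by (simp add: c_def inner_add_right)
  moreover have "t\<^sup>2 * s * (g x \<bullet> g x) > 0" using t s gg by simp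
  ultimately show False by simp
qed

(* The library proves it for
   index types of class wellorder only. *)
lemma nn_integral_change_of_variables_wellorder:
  fixes g :: "real^'m::{finite,wellorder} \<Rightarrow> real^'m::{finite,wellorder}"
    and f :: "real^'m::{finite,wellorder} \<Rightarrow> real"
  assumes S: "S \<in> sets lebesgue" and der: "\<And>x. x \<in> S \<Longrightarrow> (g has_derivative g' x) (at x within S)"
    and inj: "inj_on g S" and f0: "\<And>y. f y \<ge> 0" and fi: "integrable lebesgue f"
  shows "(\<integral>\<^sup>+y. ennreal (f y) * indicator (g ` S) y \<partial>lebesgue) =
         (\<integral>\<^sup>+x. ennreal (\<bar>det (matrix (g' x))\<bar> * f (g x)) * indicator S x \<partial>lebesgue)"
proof -
  let ?J = "\<lambda>x. \<bar>det (matrix (g' x))\<bar>"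
  have "g differentiable_on S"
    using der by (auto simp: differentiable_on_def differentiable_def)
  then have gS: "g ` S \<in> sets lebesgue"
    by (rule differentiable_image_in_sets_lebesgue[OF S, rotated]) simp
  have f_int: "f absolutely_integrable_on (g ` S)"
    unfolding set_integrable_def by (rule integrable_mult_indicator[OF gS fi])
  then have "(\<lambda>y. vec (f y) :: real^1) absolutely_integrable_on (g ` S)"
    by (simp add: absolutely_integrable_on_1_iff)
  then have cov: "(\<lambda>x. ?J x *\<^sub>R (vec (f (g x)) :: real^1)) absolutely_integrable_on S \<and>
      integral S (\<lambda>x. ?J x *\<^sub>R (vec (f (g x)) :: real^1)) = integral (g ` S) (\<lambda>y. vec (f y))"
    using has_absolute_integral_change_of_variables[OF S der inj,
        where f = "\<lambda>y. vec (f y)" and b = "integral (g ` S) (\<lambda>y. vec (f y))"]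
    by blast
  then have Jf_int: "(\<lambda>x. ?J x * f (g x)) absolutely_integrable_on S"
    by (simp add: absolutely_integrable_on_1_iff)
  have "integral S (\<lambda>x. ?J x * f (g x)) = integral (g ` S) f"
    using cov by (simp add: integral_on_1_eq vec_eq_iff)
  moreover have "(\<integral>\<^sup>+y. ennreal (f y) * indicator (g ` S) y \<partial>lborel) = ennreal (integral (g ` S) f)"
    using set_lebesgue_integral_eq_integral(1)[OF f_int] f0
    by (intro nn_integral_has_integral_lebesgue') (simp_all add: integrable_integral)
  moreover have "(\<integral>\<^sup>+x. ennreal (?J x * f (g x)) * indicator S x \<partial>lborel)
      = ennreal (integral S (\<lambda>x. ?J x * f (g x)))"
    using set_lebesgue_integral_eq_integral(1)[OF Jf_int] f0
    by (intro nn_integral_has_integral_lebesgue') (simp_all add: integrable_integral)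
  ultimately show ?thesis by (simp add: nn_integral_completion)
qed

(* To use it for an arbitrary finite index type 'n we transport everything to a
   copy of 'n carrying a well-order, along the coordinate relabelling to_copy. *)
typedef 'a ordered_copy = "UNIV :: 'a set" by auto

definition copy_index :: "'a ordered_copy \<Rightarrow> nat" where
  "copy_index x = to_nat_on (UNIV :: 'a set) (Rep_ordered_copy x)"

lemma inj_copy_index: "inj (copy_index :: ('a::finite) ordered_copy \<Rightarrow> nat)"
proof -
  have "inj_on (to_nat_on (UNIV :: 'a set)) UNIV"
    by (rule inj_on_to_nat_on) (simp add: countable_finite)
  then show ?thesis unfolding copy_index_def inj_def
    by (metis Rep_ordered_copy_inject UNIV_I inj_onD)
qed

instance ordered_copy :: (finite) finite
proof
  have "(UNIV :: 'a ordered_copy set) = Abs_ordered_copy ` UNIV"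
    by (metis Abs_ordered_copy_cases surj_def)
  then show "finite (UNIV :: 'a ordered_copy set)" by (metis finite finite_imageI)
qed

instantiation ordered_copy :: (finite) linorder
begin
definition less_eq_ordered_copy :: "'a ordered_copy \<Rightarrow> 'a ordered_copy \<Rightarrow> bool"
  where "x \<le> y \<longleftrightarrow> copy_index x \<le> copy_index y"
definition less_ordered_copy :: "'a ordered_copy \<Rightarrow> 'a ordered_copy \<Rightarrow> bool"
  where "x < y \<longleftrightarrow> copy_index x < copy_index y"
instance
proof
  fix x y z :: "'a ordered_copy"
  show "x < y \<longleftrightarrow> x \<le> y \<and> \<not> y \<le> x" "x \<le> x" "x \<le> y \<or> y \<le> x"
    by (auto simp: less_eq_ordered_copy_def less_ordered_copy_def)
  show "x \<le> y \<Longrightarrow> y \<le> z \<Longrightarrow> x \<le> z" by (simp add: less_eq_ordered_copy_def)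
  show "x \<le> y \<Longrightarrow> y \<le> x \<Longrightarrow> x = y"
    using inj_copy_index[where 'a='a] by (auto simp: less_eq_ordered_copy_def inj_def)
qed
end

instance ordered_copy :: (finite) wellorder
proof
  fix P :: "'a ordered_copy \<Rightarrow> bool" and a
  assume step: "\<And>x. (\<And>y. y < x \<Longrightarrow> P y) \<Longrightarrow> P x"
  show "P a"
    by (induction a rule: measure_induct_rule[of copy_index]) (auto intro: step simp: less_ordered_copy_def)
qed

definition to_copy :: "real^'n \<Rightarrow> real^('n ordered_copy)" where
  "to_copy x = (\<chi> i. x $ Rep_ordered_copy i)"
definition from_copy :: "real^('n ordered_copy) \<Rightarrow> real^'n" where
  "from_copy y = (\<chi> j. y $ Abs_ordered_copy j)"

lemma to_copy_nth [simp]: "to_copy x $ i = x $ Rep_ordered_copy i"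
  by (simp add: to_copy_def)
lemma from_copy_nth [simp]: "from_copy y $ j = y $ Abs_ordered_copy j"
  by (simp add: from_copy_def)
lemma from_to_copy [simp]: "from_copy (to_copy x) = x"
  by (simp add: vec_eq_iff Abs_ordered_copy_inverse)
lemma to_copy_eq_iff [simp]: "to_copy x = to_copy y \<longleftrightarrow> x = y"
  by (metis from_to_copy)
lemma linear_to_copy: "linear to_copy"
  by (rule linearI) (simp_all add: vec_eq_iff)
lemma linear_from_copy: "linear from_copy"
  by (rule linearI) (simp_all add: vec_eq_iff)
lemma bounded_linear_to_copy: "bounded_linear to_copy"
  using linear_to_copy linear_conv_bounded_linear by blast
lemma bounded_linear_from_copy: "bounded_linear from_copy"
  using linear_from_copy linear_conv_bounded_linear by blast
lemma to_copy_borel [measurable]: "to_copy \<in> borel_measurable borel"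
  by (intro borel_measurable_continuous_onI linear_continuous_on bounded_linear_to_copy)

lemma from_copy_borel [measurable]: "from_copy \<in> borel_measurable borel"
  by (intro borel_measurable_continuous_onI linear_continuous_on bounded_linear_from_copy)

lemma prod_Basis_cart: "(\<Prod>b\<in>(Basis :: (real^'n) set). f b) = (\<Prod>i\<in>UNIV. f (axis i 1))"
proof -
  have "(Basis :: (real^'n) set) = (\<lambda>i. axis i 1) ` UNIV"
    by (auto simp: Basis_vec_def)
  moreover have "inj (\<lambda>i::'n. axis i (1::real))" by (auto simp: inj_def axis_eq_axis)
  ultimately show ?thesis by (metis (no_types, lifting) prod.reindex_cong)
qed

lemma lborel_to_copy: "distr lborel borel (to_copy :: real^'n \<Rightarrow> _) = lborel"
proof (rule lborel_eqI[symmetric])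
  show "sets (distr lborel borel (to_copy :: real^'n \<Rightarrow> _)) = sets borel" by simp
  fix l u :: "real^('n ordered_copy)"
  assume le: "\<And>b. b \<in> Basis \<Longrightarrow> l \<bullet> b \<le> u \<bullet> b"
  have le': "l $ i \<le> u $ i" for i using le[of "axis i 1"] by (simp add: cart_eq_inner_axis)
  have "to_copy -` box l u = box (from_copy l) (from_copy u)"
    by (auto simp: mem_box_cart) (metis Abs_ordered_copy_inverse UNIV_I Rep_ordered_copy_inverse)+
  then have "emeasure (distr lborel borel to_copy) (box l u) = emeasure lborel (box (from_copy l) (from_copy u))"
    by (simp add: emeasure_distr)
  also have "\<dots> = (\<Prod>i\<in>UNIV. ennreal (u $ Abs_ordered_copy i - l $ Abs_ordered_copy i))"
  proof (subst emeasure_lborel_box)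
    show "from_copy l \<bullet> b \<le> from_copy u \<bullet> b" if "b \<in> Basis" for b
      using that le' by (auto simp: Basis_vec_def inner_axis)
    show "ennreal (\<Prod>b\<in>Basis. (from_copy u - from_copy l) \<bullet> b)
        = (\<Prod>i\<in>UNIV. ennreal (u $ Abs_ordered_copy i - l $ Abs_ordered_copy i))"
      using le' by (simp add: prod_Basis_cart cart_eq_inner_axis[symmetric] prod_ennreal)
  qed
  also have "\<dots> = (\<Prod>i\<in>UNIV. ennreal (u $ i - l $ i))"
    by (rule prod.reindex_bij_betw)
       (metis Abs_ordered_copy_inverse Rep_ordered_copy_inverse UNIV_I bij_betw_byWitness subsetI)
  also have "\<dots> = ennreal (\<Prod>i\<in>UNIV. u $ i - l $ i)"
    using le' by (intro prod_ennreal) simp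
  also have "\<dots> = ennreal (\<Prod>b\<in>Basis. (u - l) \<bullet> b)"
    by (simp add: prod_Basis_cart cart_eq_inner_axis[symmetric])
  finally show "emeasure (distr lborel borel to_copy) (box l u) = (\<Prod>b\<in>Basis. (u - l) \<bullet> b)" .
qed

lemma lebesgue_transfer:
  fixes T :: "'m::euclidean_space \<Rightarrow> 'k::euclidean_space"
  assumes Tm: "T \<in> borel_measurable borel" and D: "distr lborel borel T = lborel"
  shows "T \<in> lebesgue \<rightarrow>\<^sub>M lebesgue" "distr lebesgue lebesgue T = lebesgue"
proof -
  have m0: "T \<in> (lborel :: 'm measure) \<rightarrow>\<^sub>M lborel" using Tm by simp
  have m: "T \<in> (lebesgue :: 'm measure) \<rightarrow>\<^sub>M lborel"
    by (rule measurable_completion[OF m0])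
  have "distr lebesgue lborel T = distr lborel lborel T"
    by (rule distr_completion[OF m0])
  also have "\<dots> = distr lborel borel T" by (rule distr_cong) auto
  finally have DL: "distr lebesgue lborel T = lborel" using D by simp
  show "T \<in> lebesgue \<rightarrow>\<^sub>M lebesgue"
    by (rule completion.measurable_completion2[OF m]) (simp add: DL)
  have "completion (distr lebesgue lborel T) = distr lebesgue (completion lborel) T"
    by (rule completion.completion_distr_eq[OF m]) (simp add: DL)
  then show "distr lebesgue lebesgue T = lebesgue" by (simp add: DL)
qed

lemmas to_copy_lebesgue = lebesgue_transfer[OF to_copy_borel lborel_to_copy]

lemma nn_integral_to_copy:
  assumes "h \<in> borel_measurable (lebesgue :: (real^('n ordered_copy)) measure)"
  shows "(\<integral>\<^sup>+y. h y \<partial>lebesgue) = (\<integral>\<^sup>+x. h (to_copy (x::real^'n)) \<partial>lebesgue)"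
proof -
  have "(\<integral>\<^sup>+y. h y \<partial>lebesgue) = (\<integral>\<^sup>+y. h y \<partial>distr lebesgue lebesgue (to_copy :: real^'n \<Rightarrow> _))"
    by (simp add: to_copy_lebesgue(2))
  also have "\<dots> = (\<integral>\<^sup>+x. h (to_copy (x::real^'n)) \<partial>lebesgue)"
    using assms measurable_cong_sets[OF sets_distr refl]
    by (intro nn_integral_distr[OF to_copy_lebesgue(1)]) blast
  finally show ?thesis .
qed

lemma integrable_from_copy:
  fixes f :: "real^'n \<Rightarrow> real"
  assumes fi: "integrable lebesgue f" and fb: "f \<in> borel_measurable borel"
  shows "integrable lebesgue (\<lambda>y. f (from_copy y))"
proof -
  have "(\<lambda>y. f (from_copy y)) \<in> borel_measurable lebesgue"
    using measurable_comp[OF from_copy_borel fb] by (simp add: o_def measurable_completion)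
  from integrable_distr_eq[OF to_copy_lebesgue(1) this] fi
  show ?thesis by (simp add: to_copy_lebesgue(2))
qed

lemma det_conjugate_copy:
  fixes L :: "real^'n \<Rightarrow> real^'n"
  assumes "linear L"
  shows "det (matrix (to_copy \<circ> L \<circ> from_copy)) = det (matrix L)"
proof -
  have "from_copy (axis j (1::real)) = axis (Rep_ordered_copy j) 1" for j :: "'n ordered_copy"
    by (auto simp: vec_eq_iff axis_def Abs_ordered_copy_inverse Rep_ordered_copy_inverse)
  then have entries: "matrix (to_copy \<circ> L \<circ> from_copy) $ i $ j
      = matrix L $ Rep_ordered_copy i $ Rep_ordered_copy j" for i j
    by (simp add: matrix_def)
  have "bij_betw Rep_ordered_copy (UNIV :: 'n ordered_copy set) UNIV"
    by (metis Abs_ordered_copy_inverse Rep_ordered_copy_inverse UNIV_I bij_betw_byWitness subsetI)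
  from leibniz_det_reindex[OF this, of "\<lambda>i j. matrix L $ i $ j"]
  show ?thesis by (simp add: det_eq_leibniz_det entries)
qed

lemma card_ordered_copy: "CARD('a ordered_copy) = CARD('a::finite)"
  using type_definition.card[OF type_definition_ordered_copy] by simp

lemma to_copy_image_lebesgue: "X \<in> sets lebesgue \<Longrightarrow> to_copy ` (X :: (real^'n) set) \<in> sets lebesgue"
  by (rule differentiable_image_in_sets_lebesgue)
     (simp_all add: bounded_linear_imp_differentiable_on bounded_linear_to_copy card_ordered_copy)

lemma to_copy_in_image_iff [simp]: "to_copy x \<in> to_copy ` X \<longleftrightarrow> x \<in> X"
  by (metis from_to_copy imageE imageI)

lemma nn_integral_to_copy_on:
  fixes X :: "(real^'n) set"
  assumes X: "X \<in> sets lebesgue" and w: "w \<in> borel_measurable (lebesgue_on (to_copy ` X))"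
  shows "(\<integral>\<^sup>+y. ennreal (w y) * indicator (to_copy ` X) y \<partial>lebesgue)
       = (\<integral>\<^sup>+x. ennreal (w (to_copy x)) * indicator X x \<partial>lebesgue)"
proof -
  have "(\<lambda>y. if y \<in> to_copy ` X then w y else 0) \<in> borel_measurable lebesgue"
    using borel_measurable_if[OF to_copy_image_lebesgue[OF X]] w by blast
  then have "(\<lambda>y. ennreal (if y \<in> to_copy ` X then w y else 0)) \<in> borel_measurable lebesgue"
    by measurable
  moreover have "(\<lambda>y. ennreal (if y \<in> to_copy ` X then w y else 0))
      = (\<lambda>y. ennreal (w y) * indicator (to_copy ` X) y)"
    by (auto simp: fun_eq_iff indicator_def)
  ultimately show ?thesis
    by (simp add: nn_integral_to_copy indicator_def)
qed

lemma has_derivative_conjugate_copy: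
  assumes der: "\<And>x. x \<in> S \<Longrightarrow> (g has_derivative g' x) (at x within S)" and y: "y \<in> to_copy ` S"
  shows "(to_copy \<circ> g \<circ> from_copy has_derivative to_copy \<circ> g' (from_copy y) \<circ> from_copy)
           (at y within to_copy ` S)"
proof -
  have "(from_copy has_derivative from_copy) (at y within to_copy ` S)"
    by (rule bounded_linear_imp_has_derivative[OF bounded_linear_from_copy])
  moreover have "(g has_derivative g' (from_copy y)) (at (from_copy y) within from_copy ` to_copy ` S)"
    using der y by (auto simp: image_image)
  ultimately have "((\<lambda>z. g (from_copy z)) has_derivative (\<lambda>z. g' (from_copy y) (from_copy z)))
      (at y within to_copy ` S)"
    by (rule has_derivative_in_compose)
  from bounded_linear.has_derivative[OF bounded_linear_to_copy this]
  show ?thesis by (simp add: o_def)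
qed

lemma borel_measurable_det_derivative:
  fixes g :: "real^'n \<Rightarrow> real^'n"
  assumes S: "S \<in> sets lebesgue" and der: "\<And>x. x \<in> S \<Longrightarrow> (g has_derivative g' x) (at x within S)"
  shows "(\<lambda>x. det (matrix (g' x))) \<in> borel_measurable (lebesgue_on S)"
proof -
  define D where "D y = det (matrix (to_copy \<circ> g' (from_copy y) \<circ> from_copy))" for y
  from borel_measurable_det_Jacobian[OF to_copy_image_lebesgue[OF S] has_derivative_conjugate_copy[OF der]]
  have "D \<in> borel_measurable (lebesgue_on (to_copy ` S))"
    unfolding D_def .
  then have "(\<lambda>y. if y \<in> to_copy ` S then D y else 0) \<in> borel_measurable lebesgue"
    using borel_measurable_if[OF to_copy_image_lebesgue[OF S]] by blast
  from measurable_compose[OF to_copy_lebesgue(1) this]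
  have "(\<lambda>x. if x \<in> S then D (to_copy x) else 0) \<in> borel_measurable lebesgue"
    by simp
  moreover have "(\<lambda>x. if x \<in> S then D (to_copy x) else 0)
      = (\<lambda>x. if x \<in> S then det (matrix (g' x)) else 0)"
    using det_conjugate_copy[OF has_derivative_linear[OF der]] by (simp add: fun_eq_iff D_def)
  ultimately have "(\<lambda>x. if x \<in> S then det (matrix (g' x)) else 0) \<in> borel_measurable lebesgue"
    by simp
  then show ?thesis using borel_measurable_if[OF S] by blast
qed

lemma nn_integral_change_of_variables:
  fixes g :: "real^'n \<Rightarrow> real^'n" and f :: "real^'n \<Rightarrow> real"
  assumes S: "S \<in> sets lebesgue" and der: "\<And>x. x \<in> S \<Longrightarrow> (g has_derivative g' x) (at x within S)"
    and inj: "inj_on g S" and f0: "\<And>y. f y \<ge> 0" and fi: "integrable lebesgue f"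
    and fb: "f \<in> borel_measurable borel"
  shows "(\<integral>\<^sup>+y. ennreal (f y) * indicator (g ` S) y \<partial>lebesgue) =
         (\<integral>\<^sup>+x. ennreal (\<bar>det (matrix (g' x))\<bar> * f (g x)) * indicator S x \<partial>lebesgue)"
proof -
  define gc where "gc = to_copy \<circ> g \<circ> from_copy"
  define gc' where "gc' y = to_copy \<circ> g' (from_copy y) \<circ> from_copy" for y
  define fc where "fc y = f (from_copy y)" for y
  have gS: "g ` S \<in> sets lebesgue"
    using der by (intro differentiable_image_in_sets_lebesgue[OF S])
      (auto simp: differentiable_on_def differentiable_def)
  have Sc: "to_copy ` S \<in> sets lebesgue" by (rule to_copy_image_lebesgue[OF S])
  have derc: "\<And>y. y \<in> to_copy ` S \<Longrightarrow> (gc has_derivative gc' y) (at y within to_copy ` S)"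
    unfolding gc_def gc'_def by (rule has_derivative_conjugate_copy[OF der])
  have injc: "inj_on gc (to_copy ` S)"
    using inj by (auto simp: inj_on_def gc_def)
  have image: "gc ` to_copy ` S = to_copy ` g ` S"
    by (simp add: gc_def image_image)
  have fcb: "fc \<in> borel_measurable borel"
    using measurable_comp[OF from_copy_borel fb] by (simp add: fc_def[abs_def] o_def)
  have fci: "integrable lebesgue fc"
    unfolding fc_def[abs_def] by (rule integrable_from_copy[OF fi fb])
  have gcm: "gc \<in> borel_measurable (lebesgue_on (to_copy ` S))"
    using derc by (intro continuous_imp_measurable_on_sets_lebesgue[OF _ Sc] differentiable_imp_continuous_on)
      (auto simp: differentiable_on_def differentiable_def)
  have Jcm: "(\<lambda>y. \<bar>det (matrix (gc' y))\<bar> * fc (gc y)) \<in> borel_measurable (lebesgue_on (to_copy ` S))"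
    using borel_measurable_det_Jacobian[OF Sc derc] measurable_compose[OF gcm fcb] by measurable
  have "(\<integral>\<^sup>+y. ennreal (f y) * indicator (g ` S) y \<partial>lebesgue)
      = (\<integral>\<^sup>+y. ennreal (fc y) * indicator (gc ` to_copy ` S) y \<partial>lebesgue)"
    unfolding image using fcb
    by (subst nn_integral_to_copy_on[OF gS]) (simp_all add: fc_def measurable_restrict_space1 measurable_completion)
  also have "\<dots> = (\<integral>\<^sup>+y. ennreal (\<bar>det (matrix (gc' y))\<bar> * fc (gc y)) * indicator (to_copy ` S) y \<partial>lebesgue)"
    by (rule nn_integral_change_of_variables_wellorder[OF Sc derc injc _ fci]) (simp_all add: fc_def f0)
  also have "\<dots> = (\<integral>\<^sup>+x. ennreal (\<bar>det (matrix (g' x))\<bar> * f (g x)) * indicator S x \<partial>lebesgue)"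
    using det_conjugate_copy[OF has_derivative_linear[OF der]]
    by (subst nn_integral_to_copy_on[OF S Jcm]) (auto intro!: nn_integral_cong
        simp: gc_def gc'_def fc_def indicator_def)
  finally show ?thesis .
qed

lemma lebesgue_borel_sandwich:
  fixes X :: "'a::euclidean_space set"
  assumes X: "X \<in> sets lebesgue"
  obtains B1 B2 where "B1 \<in> sets borel" "B2 \<in> sets borel" "B1 \<subseteq> X" "X \<subseteq> B2"
    "B2 - B1 \<in> null_sets lebesgue"
proof -
  have X': "X \<in> sets (completion lborel)" using X by simp
  obtain N where N: "N \<in> null_sets lborel" "null_part lborel X \<subseteq> N"
    using null_part[OF X'] by blast
  let ?B1 = "main_part lborel X"
  have B1: "?B1 \<in> sets borel" using main_part_sets[OF X'] by simp
  have un: "?B1 \<union> null_part lborel X = X" by (rule main_part_null_part_Un[OF X'])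
  show thesis
  proof
    show "?B1 \<in> sets borel" "?B1 \<union> N \<in> sets borel" using B1 N by auto
    show "?B1 \<subseteq> X" "X \<subseteq> ?B1 \<union> N" using un N by auto
    have "N \<in> null_sets lebesgue" using N by (simp add: null_sets_completionI)
    moreover have "?B1 \<union> N - ?B1 \<in> sets lebesgue" using B1 N(1) by auto
    ultimately show "?B1 \<union> N - ?B1 \<in> null_sets lebesgue"
      by (rule null_sets_subset) auto
  qed
qed

lemma borel_representative:
  fixes \<rho> :: "'a::euclidean_space \<Rightarrow> real"
  assumes meas: "\<rho> \<in> borel_measurable lebesgue" and nonneg: "\<And>y. \<rho> y \<ge> 0"
  shows "\<exists>r. r \<in> borel_measurable borel \<and> (\<forall>y. r y \<ge> 0) \<and> (AE y in lebesgue. \<rho> y = r y)"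
proof -
  obtain h where h: "h \<in> borel_measurable lborel" "AE y in lborel. \<rho> y = h y"
    using completion_ex_borel_measurable_real[OF meas] by blast
  have "(\<lambda>y. max 0 (h y)) \<in> borel_measurable borel" using h(1) by (simp add: measurable_lborel1)
  moreover have "AE y in lebesgue. \<rho> y = max 0 (h y)"
    using AE_completion[OF h(2)] by eventually_elim (use nonneg in \<open>metis max.absorb2\<close>)
  ultimately show ?thesis by (intro exI[of _ "\<lambda>y. max 0 (h y)"]) auto
qed

lemma null_imp_density_null:
  assumes "X \<in> null_sets lebesgue" and "f \<in> borel_measurable lebesgue"
  shows "emeasure (density lebesgue f) X = 0"
proof -
  have "AE x in lebesgue. x \<notin> X" using assms(1) by (rule AE_not_in)
  then have "X \<in> null_sets (density lebesgue f)"
    using assms by (subst null_sets_density_iff) auto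
  then show ?thesis by (rule null_setsD1)
qed

locale injective_transport =
  fixes U :: "(real^'n) set" and T :: "real^'n \<Rightarrow> real^'n" and T' :: "real^'n \<Rightarrow> real^'n \<Rightarrow> real^'n"
    and \<rho>0 \<rho>1 :: "real^'n \<Rightarrow> real"
  assumes U_open: "open U"
    and T_deriv: "\<And>x. x \<in> U \<Longrightarrow> (T has_derivative T' x) (at x)"
    and \<rho>0_meas: "\<rho>0 \<in> borel_measurable lebesgue" and \<rho>0_nonneg: "\<And>x. \<rho>0 x \<ge> 0"
    and \<rho>0_prob: "(\<integral>\<^sup>+x. ennreal (\<rho>0 x) \<partial>lebesgue) = 1"
    and \<rho>0_pos: "AE x in lebesgue. x \<in> U \<longrightarrow> \<rho>0 x > 0"
    and \<rho>0_outside: "AE x in lebesgue. x \<notin> U \<longrightarrow> \<rho>0 x = 0"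
    and \<rho>1_meas: "\<rho>1 \<in> borel_measurable lebesgue" and \<rho>1_nonneg: "\<And>y. \<rho>1 y \<ge> 0"
    and \<rho>1_prob: "(\<integral>\<^sup>+y. ennreal (\<rho>1 y) \<partial>lebesgue) = 1"
    and push: "\<And>B. B \<in> sets borel \<Longrightarrow>
                 emeasure (density lebesgue \<rho>0) (T -` B) = emeasure (density lebesgue \<rho>1) B"
    and injective: "\<exists>S\<in>sets lebesgue. emeasure (density lebesgue \<rho>0) (- S) = 0 \<and> inj_on T S"
begin

abbreviation "\<mu> \<equiv> density lebesgue (\<lambda>x. ennreal (\<rho>0 x))"
abbreviation "\<nu> \<equiv> density lebesgue (\<lambda>x. ennreal (\<rho>1 x))"

(* T is Lebesgue measurable: otherwise both a Borel set and its complement would have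
   \<nu>-measure zero. *)
lemma preimage_sets: assumes B: "B \<in> sets borel" shows "T -` B \<in> sets lebesgue"
proof (rule ccontr)
  assume nB: "T -` B \<notin> sets lebesgue"
  then have "- (T -` B) \<notin> sets lebesgue"
    by (metis Compl_in_sets_lebesgue double_complement)
  then have "emeasure \<mu> (T -` (- B)) = 0" by (simp add: vimage_Compl emeasure_notin_sets)
  moreover have "emeasure \<mu> (T -` B) = 0" using nB by (simp add: emeasure_notin_sets)
  ultimately have "emeasure \<nu> B = 0" "emeasure \<nu> (- B) = 0"
    using push B by auto
  moreover have "emeasure \<nu> B + emeasure \<nu> (- B) = emeasure \<nu> (B \<union> - B)"
    using B by (intro plus_emeasure) auto
  ultimately have "emeasure \<nu> UNIV = 0" by simp
  moreover have "emeasure \<nu> UNIV = 1"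
    using \<rho>1_meas \<rho>1_prob by (simp add: emeasure_density)
  ultimately show False by simp
qed

(* On U the density \<rho>0 is positive, so \<mu>-null sets are Lebesgue null. *)
lemma mu_null_imp_null:
  assumes X: "X \<in> sets lebesgue" "X \<subseteq> U" and zero: "emeasure \<mu> X = 0"
  shows "X \<in> null_sets lebesgue"
proof -
  have "X \<in> null_sets \<mu>" using X zero by (intro null_setsI) auto
  then have "AE x in lebesgue. x \<in> X \<longrightarrow> ennreal (\<rho>0 x) = 0"
    using \<rho>0_meas by (subst (asm) null_sets_density_iff) auto
  then have "AE x in lebesgue. x \<notin> X"
    using \<rho>0_pos by eventually_elim (use X in \<open>auto simp: ennreal_eq_0_iff\<close>)
  then show ?thesis
    using completion.AE_iff_null_sets[where M=lborel and P="\<lambda>x. x \<notin> X"] by simp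
qed

definition inj_domain :: "(real^'n) set" where
  "inj_domain = (SOME S. S \<in> sets lebesgue \<and> emeasure \<mu> (- S) = 0 \<and> inj_on T S) \<inter> U"

lemma inj_domain:
  "inj_domain \<in> sets lebesgue" "inj_domain \<subseteq> U" "inj_on T inj_domain"
  "emeasure \<mu> (- inj_domain) = 0" "AE x in lebesgue. x \<in> U \<longrightarrow> x \<in> inj_domain"
proof -
  define S where "S = (SOME S. S \<in> sets lebesgue \<and> emeasure \<mu> (- S) = 0 \<and> inj_on T S)"
  have S: "S \<in> sets lebesgue" "emeasure \<mu> (- S) = 0" "inj_on T S"
    using someI_ex[OF injective[unfolded Bex_def]] unfolding S_def by auto
  have inj_domain_eq: "inj_domain = S \<inter> U" by (simp add: inj_domain_def S_def)
  have U: "U \<in> sets lebesgue" using U_open by (simp add: borel_open)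
  show "inj_domain \<in> sets lebesgue" "inj_domain \<subseteq> U" "inj_on T inj_domain"
    using S U by (auto simp: inj_domain_eq inj_on_Int)
  have "- U \<in> null_sets \<mu>"
    using \<rho>0_outside U \<rho>0_meas by (subst null_sets_density_iff) (auto simp: Compl_in_sets_lebesgue)
  moreover have "- S \<in> null_sets \<mu>" using S by (intro null_setsI) (auto simp: Compl_in_sets_lebesgue)
  ultimately have "- S \<union> - U \<in> null_sets \<mu>" by auto
  then show "emeasure \<mu> (- inj_domain) = 0" by (simp add: inj_domain_eq null_setsD1)
  have "emeasure \<mu> (U - S) \<le> emeasure \<mu> (- S)"
    using S U by (intro emeasure_mono) (auto simp: Compl_in_sets_lebesgue)
  then have "U - S \<in> null_sets lebesgue"
    using S U by (intro mu_null_imp_null) auto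
  then show "AE x in lebesgue. x \<in> U \<longrightarrow> x \<in> inj_domain"
    by (rule AE_not_in[THEN eventually_mono]) (auto simp: inj_domain_eq)
qed

lemma image_sets: "E \<subseteq> U \<Longrightarrow> E \<in> sets lebesgue \<Longrightarrow> T ` E \<in> sets lebesgue"
  using T_deriv by (intro differentiable_image_in_sets_lebesgue)
    (auto simp: differentiable_on_def differentiable_def intro: has_derivative_at_withinI)

lemma mu_eq_nu_image:
  assumes E: "E \<in> sets lebesgue" and E_dom: "E \<subseteq> inj_domain"
  shows "emeasure \<mu> E = emeasure \<nu> (T ` E)"
proof -
  have TE: "T ` E \<in> sets lebesgue" using E E_dom inj_domain(2) by (intro image_sets) auto
  obtain B1 B2 where B: "B1 \<in> sets borel" "B2 \<in> sets borel" "B1 \<subseteq> T ` E" "T ` E \<subseteq> B2"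
      and gap: "B2 - B1 \<in> null_sets lebesgue"
    using lebesgue_borel_sandwich[OF TE] by blast
  have B_leb: "B1 \<in> sets lebesgue" "B2 \<in> sets lebesgue" using B by auto
  have "emeasure \<nu> B2 \<le> emeasure \<nu> B1 + emeasure \<nu> (B2 - B1)"
    using B_leb by (intro emeasure_subadditive[THEN order_trans[rotated]] emeasure_mono) auto
  moreover have "emeasure \<nu> (B2 - B1) = 0"
    using gap \<rho>1_meas by (intro null_imp_density_null) auto
  moreover have "emeasure \<nu> B1 \<le> emeasure \<nu> (T ` E)" "emeasure \<nu> (T ` E) \<le> emeasure \<nu> B2"
    using B TE B_leb by (auto intro!: emeasure_mono)
  ultimately have \<nu>B: "emeasure \<nu> (T ` E) = emeasure \<nu> B1" "emeasure \<nu> B2 = emeasure \<nu> B1"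
    by (auto intro: antisym order_trans)
  have "emeasure \<mu> E \<le> emeasure \<mu> (T -` B2)"
    using B preimage_sets by (intro emeasure_mono) auto
  also have "\<dots> = emeasure \<nu> B1" using push B \<nu>B by simp
  finally have le: "emeasure \<mu> E \<le> emeasure \<nu> B1" .
  have "T -` B1 \<subseteq> E \<union> - inj_domain"
  proof
    fix x assume "x \<in> T -` B1"
    then obtain e where e: "e \<in> E" "T x = T e" using B(3) by auto
    then have "x \<in> inj_domain \<Longrightarrow> x = e" using E_dom inj_onD[OF inj_domain(3)] by blast
    with e show "x \<in> E \<union> - inj_domain" by blast
  qed
  then have "emeasure \<mu> (T -` B1) \<le> emeasure \<mu> (E \<union> - inj_domain)"
    using E inj_domain(1) by (intro emeasure_mono) (auto simp: Compl_in_sets_lebesgue)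
  also have "\<dots> \<le> emeasure \<mu> E + emeasure \<mu> (- inj_domain)"
    using E inj_domain(1) by (intro emeasure_subadditive) (auto simp: Compl_in_sets_lebesgue)
  finally have "emeasure \<nu> B1 \<le> emeasure \<mu> E" using push B inj_domain(4) by simp
  with le \<nu>B show ?thesis by (auto intro: antisym)
qed

(* A Borel representative of \<rho>1; it can be composed with T. *)
definition \<rho>1_rep :: "real^'n \<Rightarrow> real" where
  "\<rho>1_rep = (SOME r. r \<in> borel_measurable borel \<and> (\<forall>y. r y \<ge> 0) \<and> (AE y in lebesgue. \<rho>1 y = r y))"

lemma \<rho>1_rep:
  "\<rho>1_rep \<in> borel_measurable borel" "\<And>y. \<rho>1_rep y \<ge> 0" "AE y in lebesgue. \<rho>1 y = \<rho>1_rep y"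
  using someI_ex[OF borel_representative[OF \<rho>1_meas \<rho>1_nonneg]] unfolding \<rho>1_rep_def by auto

lemma \<rho>1_rep_integrable: "integrable lebesgue \<rho>1_rep"
proof (rule integrableI_nonneg)
  show "\<rho>1_rep \<in> borel_measurable lebesgue" using \<rho>1_rep(1) by (simp add: measurable_completion)
  have "(\<integral>\<^sup>+ y. ennreal (\<rho>1_rep y) \<partial>lebesgue) = (\<integral>\<^sup>+ y. ennreal (\<rho>1 y) \<partial>lebesgue)"
    using \<rho>1_rep(3) by (intro nn_integral_cong_AE) auto
  then show "(\<integral>\<^sup>+ y. ennreal (\<rho>1_rep y) \<partial>lebesgue) < \<infinity>" using \<rho>1_prob by simp
qed (simp add: \<rho>1_rep(2))

lemma density_identity_on_inj_domain:
  assumes E: "E \<in> sets lebesgue" and E_dom: "E \<subseteq> inj_domain"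
  shows "(\<integral>\<^sup>+x. ennreal (\<rho>0 x) * indicator E x \<partial>lebesgue) =
         (\<integral>\<^sup>+x. ennreal (\<bar>det (matrix (T' x))\<bar> * \<rho>1_rep (T x)) * indicator E x \<partial>lebesgue)"
proof -
  have EU: "E \<subseteq> U" using E_dom inj_domain(2) by auto
  have der: "(T has_derivative T' x) (at x within E)" if "x \<in> E" for x
    using T_deriv[of x] that EU by (auto intro: has_derivative_at_withinI)
  have TE: "T ` E \<in> sets lebesgue" by (rule image_sets[OF EU E])
  have "(\<integral>\<^sup>+x. ennreal (\<rho>0 x) * indicator E x \<partial>lebesgue) = emeasure \<mu> E"
    using E \<rho>0_meas by (simp add: emeasure_density)
  also have "\<dots> = emeasure \<nu> (T ` E)" by (rule mu_eq_nu_image[OF E E_dom])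
  also have "\<dots> = (\<integral>\<^sup>+y. ennreal (\<rho>1_rep y) * indicator (T ` E) y \<partial>lebesgue)"
    using TE \<rho>1_meas \<rho>1_rep(3) by (simp add: emeasure_density) (intro nn_integral_cong_AE; auto)
  also have "\<dots> = (\<integral>\<^sup>+x. ennreal (\<bar>det (matrix (T' x))\<bar> * \<rho>1_rep (T x)) * indicator E x \<partial>lebesgue)"
    using inj_domain(3) E_dom
    by (intro nn_integral_change_of_variables[OF E der _ \<rho>1_rep(2) \<rho>1_rep_integrable \<rho>1_rep(1)])
      (auto intro: inj_on_subset)
  finally show ?thesis .
qed

lemma jacobian_measurable:
  "(\<lambda>x. if x \<in> U then \<bar>det (matrix (T' x))\<bar> * \<rho>1_rep (T x) else 0) \<in> borel_measurable lebesgue"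
proof -
  have U: "U \<in> sets lebesgue" using U_open by (simp add: borel_open)
  have der: "\<And>x. x \<in> U \<Longrightarrow> (T has_derivative T' x) (at x within U)"
    using T_deriv by (auto intro: has_derivative_at_withinI)
  have "continuous_on U T"
    using der by (intro differentiable_imp_continuous_on) (auto simp: differentiable_on_def differentiable_def)
  then have "T \<in> borel_measurable (lebesgue_on U)"
    by (rule continuous_imp_measurable_on_sets_lebesgue[OF _ U])
  then have "(\<lambda>x. \<bar>det (matrix (T' x))\<bar> * \<rho>1_rep (T x)) \<in> borel_measurable (lebesgue_on U)"
    using borel_measurable_det_derivative[OF U der] measurable_compose[of T _ borel \<rho>1_rep] \<rho>1_rep(1)
    by measurable
  then show ?thesis by (rule borel_measurable_if[OF U, THEN iffD2])
qed

(* Two finite densities with equal integrals over all measurable sets agree a.e. *)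
lemma jacobian_identity_on_inj_domain:
  "AE x in lebesgue. x \<in> inj_domain \<longrightarrow> \<rho>0 x = \<bar>det (matrix (T' x))\<bar> * \<rho>1_rep (T x)"
proof -
  define w where "w x = (if x \<in> U then \<bar>det (matrix (T' x))\<bar> * \<rho>1_rep (T x) else 0)" for x
  define F where "F x = ennreal (\<rho>0 x) * indicator inj_domain x" for x
  define G where "G x = ennreal (w x) * indicator inj_domain x" for x
  have Fm: "F \<in> borel_measurable lebesgue" unfolding F_def using \<rho>0_meas inj_domain(1) by measurable
  have Gm: "G \<in> borel_measurable lebesgue"
    unfolding G_def w_def using jacobian_measurable inj_domain(1) by measurable
  have "integral\<^sup>N lebesgue F \<le> (\<integral>\<^sup>+ x. ennreal (\<rho>0 x) \<partial>lebesgue)"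
    unfolding F_def by (intro nn_integral_mono) (auto simp: indicator_def)
  then have fin: "integral\<^sup>N lebesgue F \<noteq> \<infinity>" using \<rho>0_prob by (auto simp: top_unique)
  have "density lebesgue F = density lebesgue G"
  proof (rule measure_eqI)
    fix X assume "X \<in> sets (density lebesgue F)"
    then have X: "X \<in> sets lebesgue" by simp
    have "emeasure (density lebesgue F) X = (\<integral>\<^sup>+x. ennreal (\<rho>0 x) * indicator (X \<inter> inj_domain) x \<partial>lebesgue)"
      unfolding emeasure_density[OF Fm X] by (intro nn_integral_cong) (auto simp: F_def indicator_def)
    also have "\<dots> = (\<integral>\<^sup>+x. ennreal (\<bar>det (matrix (T' x))\<bar> * \<rho>1_rep (T x)) * indicator (X \<inter> inj_domain) x \<partial>lebesgue)"
      using X inj_domain(1) by (intro density_identity_on_inj_domain) auto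
    also have "\<dots> = (\<integral>\<^sup>+x. ennreal (w x) * indicator (X \<inter> inj_domain) x \<partial>lebesgue)"
      using inj_domain(2) by (intro nn_integral_cong) (auto simp: w_def indicator_def)
    also have "\<dots> = emeasure (density lebesgue G) X"
      unfolding emeasure_density[OF Gm X] by (intro nn_integral_cong) (auto simp: G_def indicator_def)
    finally show "emeasure (density lebesgue F) X = emeasure (density lebesgue G) X" .
  qed simp
  then have "AE x in lebesgue. F x = G x"
    using finite_density_unique[OF Fm Gm _ _ fin] by simp
  then show ?thesis
    by eventually_elim (use \<rho>0_nonneg \<rho>1_rep(2) inj_domain(2) in \<open>auto simp: F_def G_def w_def\<close>)
qed

(* Changing \<rho>1 on a null set does not matter after composition with T, because T
   pulls null sets back to \<mu>-null sets, and these are null in U. *)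
lemma representative_along_T: "AE x in lebesgue. x \<in> inj_domain \<longrightarrow> \<rho>1 (T x) = \<rho>1_rep (T x)"
proof -
  obtain N where N0: "{y \<in> space lborel. \<rho>1 y \<noteq> \<rho>1_rep y} \<subseteq> N" "emeasure lborel N = 0" "N \<in> sets lborel"
    using \<rho>1_rep(3)[unfolded AE_completion_iff] by (rule AE_E)
  then have N: "{y. \<rho>1 y \<noteq> \<rho>1_rep y} \<subseteq> N" "N \<in> null_sets lborel" by (auto intro: null_setsI)
  then have Nb: "N \<in> sets borel" and Nl: "N \<in> null_sets lebesgue"
    by (auto simp: null_sets_completionI)
  have "emeasure \<mu> (T -` N \<inter> inj_domain) \<le> emeasure \<mu> (T -` N)"
    using preimage_sets[OF Nb] by (intro emeasure_mono) auto
  also have "\<dots> = emeasure \<nu> N" using push Nb by simp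
  also have "\<dots> = 0" using Nl \<rho>1_meas by (intro null_imp_density_null) auto
  finally have "T -` N \<inter> inj_domain \<in> null_sets lebesgue"
    using preimage_sets[OF Nb] inj_domain(1,2) by (intro mu_null_imp_null) auto
  then show ?thesis
    by (rule AE_not_in[THEN eventually_mono]) (use N(1) in auto)
qed

theorem jacobian_equation:
  "AE x in lebesgue. x \<in> U \<longrightarrow> \<rho>0 x = \<bar>det (matrix (T' x))\<bar> * \<rho>1 (T x)"
  using inj_domain(5) jacobian_identity_on_inj_domain representative_along_T by eventually_elim auto

end

lemma convex_boundary_null:
  fixes A :: "(real^'n) set"
  assumes "compact A" "convex A"
  shows "A - interior A \<in> null_sets lebesgue"
proof -
  have "A - interior A = frontier A"
    using assms by (simp add: frontier_def compact_imp_closed closure_closed)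
  then show ?thesis
    using negligible_convex_frontier[OF assms(2)] by (simp add: negligible_iff_null_sets)
qed

lemma jacobian_of_scaled_normalized_gradient:
  fixes \<phi> :: "real^'n \<Rightarrow> real" and g :: "real^'n \<Rightarrow> real^'n"
  assumes dim: "CARD('n) \<ge> 2" and x: "x \<in> interior A"
    and conv: "convex {z \<in> A. \<phi> z \<le> \<phi> x}" and \<phi>_nonneg: "\<phi> x \<ge> 0"
    and dphi: "\<And>y. y \<in> interior A \<Longrightarrow> (\<phi> has_derivative (\<lambda>h. g y \<bullet> h)) (at y)"
    and dg: "(g has_derivative g') (at x)" and gnz: "g x \<noteq> 0"
    and T: "\<And>y. y \<in> interior A \<Longrightarrow> T y = \<phi> y *\<^sub>R sgn (g y)"
  shows "(T has_derivative frechet_derivative T (at x)) (at x)"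
    and "det (matrix (frechet_derivative T (at x)))
           = norm (g x) * \<phi> x ^ (CARD('n) - 1) * gauss_curvature (\<lambda>y. sgn (g y)) x"
    and "det (matrix (frechet_derivative T (at x))) \<ge> 0"
proof -
  let ?DT = "\<lambda>h. (g x \<bullet> h) *\<^sub>R sgn (g x) + \<phi> x *\<^sub>R sgn_deriv (g x) (g' h)"
  have D: "(T has_derivative ?DT) (at x)"
    by (rule has_derivative_transform_within_open[OF
          has_derivative_scaled_normalized_gradient[OF dphi[OF x] dg gnz] open_interior x])
       (simp add: T)
  then have DT: "frechet_derivative T (at x) = ?DT"
    by (rule frechet_derivative_at[symmetric])
  with D show "(T has_derivative frechet_derivative T (at x)) (at x)" by simp
  have "g x \<bullet> h = norm (g x) * (sgn (g x) \<bullet> h)" for h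
    using gnz by (simp add: sgn_div_norm)
  then show det: "det (matrix (frechet_derivative T (at x)))
      = norm (g x) * \<phi> x ^ (CARD('n) - 1) * gauss_curvature (\<lambda>y. sgn (g y)) x"
    unfolding DT using det_normalized_gradient_map[OF dim dg gnz] by simp
  have "gauss_curvature (\<lambda>y. sgn (g y)) x \<ge> 0"
    using quasiconvex_hessian_tangent_nonneg[OF x conv dphi dg gnz]
    by (intro gauss_curvature_normalized_nonneg[OF dim dg gnz])
  then show "det (matrix (frechet_derivative T (at x))) \<ge> 0"
    unfolding det using \<phi>_nonneg by simp
qed

lemma jacobian_equation_on_convex_body:
  fixes A :: "(real^'n) set" and T :: "real^'n \<Rightarrow> real^'n" and \<rho>0 \<rho>1 :: "real^'n \<Rightarrow> real"
  assumes A_compact: "compact A" and A_convex: "convex A"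
    and \<rho>0_meas: "\<rho>0 \<in> borel_measurable lebesgue" and \<rho>0_nonneg: "\<forall>x. \<rho>0 x \<ge> 0"
    and \<rho>0_supp: "\<forall>x. x \<notin> A \<longrightarrow> \<rho>0 x = 0" and \<rho>0_pos: "AE x in lebesgue. x \<in> A \<longrightarrow> \<rho>0 x > 0"
    and \<rho>0_prob: "(\<integral>\<^sup>+ x. ennreal (\<rho>0 x) \<partial>lebesgue) = 1"
    and \<rho>1_meas: "\<rho>1 \<in> borel_measurable lebesgue" and \<rho>1_nonneg: "\<forall>y. \<rho>1 y \<ge> 0"
    and \<rho>1_prob: "(\<integral>\<^sup>+ y. ennreal (\<rho>1 y) \<partial>lebesgue) = 1"
    and T_deriv: "\<And>x. x \<in> interior A \<Longrightarrow> (T has_derivative frechet_derivative T (at x)) (at x)"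
    and push: "\<forall>B\<in>sets borel. emeasure (density lebesgue \<rho>0) (T -` B) = emeasure (density lebesgue \<rho>1) B"
    and T_inj: "\<exists>S. S \<in> sets lebesgue \<and> S \<subseteq> A \<and>
                  emeasure (density lebesgue \<rho>0) (A - S) = 0 \<and> inj_on T S"
  shows "AE x in lebesgue. x \<in> A \<longrightarrow> \<rho>0 x = \<bar>det (matrix (frechet_derivative T (at x)))\<bar> * \<rho>1 (T x)"
proof -
  have boundary: "A - interior A \<in> null_sets lebesgue"
    by (rule convex_boundary_null[OF A_compact A_convex])
  have A_sets: "A \<in> sets lebesgue" using A_compact by (simp add: compact_imp_closed borel_closed)
  have outside: "- A \<in> null_sets (density lebesgue \<rho>0)"
    using A_sets \<rho>0_meas \<rho>0_supp by (subst null_sets_density_iff) (auto simp: Compl_in_sets_lebesgue)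
  have no_mass_outside: "emeasure (density lebesgue \<rho>0) (- S) = 0"
    if S: "S \<in> sets lebesgue" "emeasure (density lebesgue \<rho>0) (A - S) = 0" for S
  proof -
    have "A - S \<in> null_sets (density lebesgue \<rho>0)" using S A_sets by (intro null_setsI) auto
    with outside have "- A \<union> (A - S) \<in> null_sets (density lebesgue \<rho>0)" by auto
    moreover have "- S \<in> sets (density lebesgue \<rho>0)" using S by (simp add: Compl_in_sets_lebesgue)
    ultimately have "- S \<in> null_sets (density lebesgue \<rho>0)" by (rule null_sets_subset) auto
    then show ?thesis by (rule null_setsD1)
  qed
  interpret injective_transport "interior A" T "\<lambda>x. frechet_derivative T (at x)" \<rho>0 \<rho>1
  proof
    show "\<And>x. \<rho>0 x \<ge> 0" "\<And>y. \<rho>1 y \<ge> 0" using \<rho>0_nonneg \<rho>1_nonneg by auto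
    show "AE x in lebesgue. x \<in> interior A \<longrightarrow> \<rho>0 x > 0"
      using \<rho>0_pos by eventually_elim (use interior_subset in blast)
    show "AE x in lebesgue. x \<notin> interior A \<longrightarrow> \<rho>0 x = 0"
      using AE_not_in[OF boundary] by eventually_elim (use \<rho>0_supp in blast)
    show "\<And>B. B \<in> sets borel \<Longrightarrow>
        emeasure (density lebesgue \<rho>0) (T -` B) = emeasure (density lebesgue \<rho>1) B"
      using push by blast
    show "\<exists>S\<in>sets lebesgue. emeasure (density lebesgue \<rho>0) (- S) = 0 \<and> inj_on T S"
      using T_inj no_mass_outside by blast
  qed (simp_all add: T_deriv \<rho>0_meas \<rho>0_prob \<rho>1_meas \<rho>1_prob)
  have "AE x in lebesgue. x \<in> A \<longrightarrow> x \<in> interior A"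
    using AE_not_in[OF boundary] by eventually_elim auto
  with jacobian_equation show ?thesis by eventually_elim blast
qed

theorem mainTheorem2:
  fixes A :: "(real^'n) set" and r :: real
    and \<rho>0 \<rho>1 :: "real^'n \<Rightarrow> real"
    and \<phi> :: "real^'n \<Rightarrow> real"
    and g :: "real^'n \<Rightarrow> real^'n"
    and H :: "real^'n \<Rightarrow> real^'n^'n"
    and T :: "real^'n \<Rightarrow> real^'n"
  assumes dim: "CARD('n) \<ge> 2"
    and A_compact: "compact A" and A_convex: "convex A"
    and \<rho>0_meas: "\<rho>0 \<in> borel_measurable lebesgue"
    and \<rho>0_nonneg: "\<forall>x. \<rho>0 x \<ge> 0"
    and \<rho>0_supp: "\<forall>x. x \<notin> A \<longrightarrow> \<rho>0 x = 0"
    and \<rho>0_pos: "AE x in lebesgue. x \<in> A \<longrightarrow> \<rho>0 x > 0"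
    and \<rho>0_prob: "(\<integral>\<^sup>+ x. ennreal (\<rho>0 x) \<partial>lebesgue) = 1"
    and \<rho>1_meas: "\<rho>1 \<in> borel_measurable lebesgue"
    and \<rho>1_nonneg: "\<forall>y. \<rho>1 y \<ge> 0"
    and \<rho>1_supp: "\<forall>y. y \<notin> cball 0 r \<longrightarrow> \<rho>1 y = 0"
    and \<rho>1_pos: "AE y in lebesgue. y \<in> cball 0 r \<longrightarrow> \<rho>1 y > 0"
    and \<rho>1_prob: "(\<integral>\<^sup>+ y. ennreal (\<rho>1 y) \<partial>lebesgue) = 1"
    and \<phi>_cont: "continuous_on A \<phi>"
    and \<phi>_range: "\<forall>x\<in>A. 0 \<le> \<phi> x \<and> \<phi> x \<le> r"
    and \<phi>_sublevel: "\<forall>t. convex {x\<in>A. \<phi> x \<le> t}"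
    and \<phi>_grad: "\<forall>x\<in>interior A. (\<phi> has_derivative (\<lambda>h. g x \<bullet> h)) (at x)"
    and g_deriv: "\<forall>x\<in>interior A. (g has_derivative (\<lambda>h. H x *v h)) (at x)"
    and H_cont: "continuous_on (interior A) H"
    and g_nonzero: "\<forall>x\<in>interior A. g x \<noteq> 0"
    and T_def: "\<forall>x\<in>interior A. T x = \<phi> x *\<^sub>R (inverse (norm (g x)) *\<^sub>R g x)"
    and push: "\<forall>B\<in>sets borel. emeasure (density lebesgue \<rho>0) (T -` B) = emeasure (density lebesgue \<rho>1) B"
    and T_inj: "\<exists>S. S \<in> sets lebesgue \<and> S \<subseteq> A \<and>
                  emeasure (density lebesgue \<rho>0) (A - S) = 0 \<and> inj_on T S"
  shows "AE x in lebesgue. x \<in> A \<longrightarrow>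
     (let n = (\<lambda>y. inverse (norm (g y)) *\<^sub>R g y);
          K = gauss_curvature n x
      in det (matrix (frechet_derivative T (at x)))
           = norm (g x) * \<phi> x ^ (CARD('n) - 1) * K
         \<and> \<rho>0 x = \<rho>1 (\<phi> x *\<^sub>R n x) * norm (g x) * \<phi> x ^ (CARD('n) - 1) * K)"
proof -
  have T_on_U: "\<And>y. y \<in> interior A \<Longrightarrow> T y = \<phi> y *\<^sub>R sgn (g y)"
    using T_def by (simp add: sgn_div_norm)
  have dphi: "\<And>y. y \<in> interior A \<Longrightarrow> (\<phi> has_derivative (\<lambda>h. g y \<bullet> h)) (at y)"
    using \<phi>_grad by blast
  have pointwise: "(T has_derivative frechet_derivative T (at x)) (at x)"
      "det (matrix (frechet_derivative T (at x)))
         = norm (g x) * \<phi> x ^ (CARD('n) - 1) * gauss_curvature (\<lambda>y. sgn (g y)) x"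
      "det (matrix (frechet_derivative T (at x))) \<ge> 0" if x: "x \<in> interior A" for x
    using jacobian_of_scaled_normalized_gradient[OF dim x \<phi>_sublevel[rule_format] _ dphi
        g_deriv[rule_format, OF x] g_nonzero[rule_format, OF x] T_on_U]
      x interior_subset \<phi>_range by blast+
  have "AE x in lebesgue. x \<in> A \<longrightarrow> \<rho>0 x = \<bar>det (matrix (frechet_derivative T (at x)))\<bar> * \<rho>1 (T x)"
    by (rule jacobian_equation_on_convex_body[OF A_compact A_convex \<rho>0_meas \<rho>0_nonneg \<rho>0_supp
          \<rho>0_pos \<rho>0_prob \<rho>1_meas \<rho>1_nonneg \<rho>1_prob pointwise(1) push T_inj])
  moreover have "AE x in lebesgue. x \<in> A \<longrightarrow> x \<in> interior A"
    using AE_not_in[OF convex_boundary_null[OF A_compact A_convex]] by eventually_elim auto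
  ultimately show ?thesis
  proof eventually_elim
    case (elim x)
    have "(\<lambda>y. inverse (norm (g y)) *\<^sub>R g y) = (\<lambda>y. sgn (g y))"
      by (simp add: fun_eq_iff sgn_div_norm)
    with elim pointwise[of x] T_on_U[of x] show ?case by (auto simp: Let_def mult_ac)
  qed
qed

end
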